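(* Let $(a_n(q))_{n\ge1}$ be a sequence in $\mathbb{Z}[q]$ and $N\ge1$. Suppose that $\prod_{d\mid N,\,\mu(d)=1}a_{N/d}(q^d)\equiv\prod_{d\mid N,\,\mu(d)=-1}a_{N/d}(q^d)\pmod{[N]_q}$ and that $\sum_{d\mid n}\mu(d)a_{n/d}(q^d)\equiv0\pmod{[n]_q}$ for all $1\le n<N$. Then $[N]_q$ divides $\left(\sum_{d\mid N}\mu(d)\,a_{N/d}(q^d)\right)\cdot\prod_{d\mid N,\ d>1,\ \mu(d)=1}a_{N/d}(q^d)$ in $\mathbb{Z}[q]$.
   Context: $\mu$ is the Möbius function and $[n]_q=1+q+\dots+q^{n-1}$; polynomial congruences modulo $[n]_q$ mean divisibility of the difference by $[n]_q$ in $\mathbb{Z}[q]$. *)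

theory Defs
  imports "HOL-Computational_Algebra.Computational_Algebra"
begin

definition moebius :: "nat \<Rightarrow> int" where
  "moebius n = (if n = 0 \<or> \<not> squarefree n then 0 else (-1) ^ card (prime_factors n))"

definition qint :: "nat \<Rightarrow> int poly" where
  "qint n = (\<Sum>i<n. monom 1 i)"

definition qsub :: "int poly \<Rightarrow> nat \<Rightarrow> int poly" where
  "qsub p d = pcompose p (monom 1 d)"

end

theory Submission
  imports Defs
begin

(*
  Let z be a nontrivial N-th root of unity, of order e > 1. Strong induction on n < N, using
  the hypothesis for n, gives a_n(z) = a_(n/e)(1) whenever e divides n: in the Moebius sum
  for n every term with d > 1 becomes a_(n/lcm(d,e))(1), because z^d has order lcm(d,e)/d,
  and sum_(d|n) mu(d) h(lcm(d,e)) = 0 for e > 1, since d |-> d/p resp. d*p (p a prime factor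
  of e) pairs divisors of opposite sign with equal lcm with e. The same identification at
  n = N shows that the difference of the two products in the hypothesis takes the same value
  at z as the target polynomial. Finally [N]_q is monic and its roots are exactly the
  nontrivial N-th roots of unity, each simple, so it divides every integer polynomial that
  vanishes at all of them.
*)

lemma moebius_1 [simp]: "moebius 1 = 1" "moebius (Suc 0) = 1"
  by (simp_all add: moebius_def)

lemma moebius_cases: "moebius d = 0 \<or> moebius d = 1 \<or> moebius d = -1"
  by (auto simp: moebius_def minus_one_power_iff)

lemma moebius_nonzeroD:
  assumes "moebius d \<noteq> 0"
  shows "d > 0" "squarefree d"
  using assms by (auto simp: moebius_def split: if_splits)

lemma moebius_mult_prime:
  assumes p: "prime p" and "\<not> p dvd d" and "d > 0"
  shows "moebius (d * p) = - moebius d"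
proof -
  have "coprime d p"
    using assms by (metis prime_imp_coprime coprime_commute)
  then have "squarefree (d * p) \<longleftrightarrow> squarefree d"
    using squarefree_mult_coprime squarefree_prime[OF p] squarefree_multD(1) by blast
  moreover have "prime_factors (d * p) = insert p (prime_factors d)"
    using assms by (simp add: prime_factors_product prime_prime_factors)
  moreover have "p \<notin> prime_factors d"
    using assms by auto
  ultimately show ?thesis
    using assms by (simp add: moebius_def prime_gt_0_nat)
qed

definition toggle_factor :: "nat \<Rightarrow> nat \<Rightarrow> nat" where
  "toggle_factor p d = (if p dvd d then d div p else d * p)"

lemma toggle_factor_cases:
  assumes p: "prime p" and "squarefree d"
  obtains c where "\<not> p dvd c" "d = c" "toggle_factor p d = c * p"
    | c where "\<not> p dvd c" "d = c * p" "toggle_factor p d = c"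
proof (cases "p dvd d")
  case True
  then have d: "d = d div p * p" by simp
  have "\<not> p dvd d div p"
  proof
    assume "p dvd d div p"
    then have "p * p dvd d" using d by (metis mult_dvd_mono dvd_refl)
    then show False
      using p \<open>squarefree d\<close> by (metis not_prime_unit power2_eq_square squarefree_def)
  qed
  with d True show ?thesis using that(2) by (simp add: toggle_factor_def)
qed (use that(1) in \<open>simp add: toggle_factor_def\<close>)

lemma
  assumes "prime p" "p dvd n" "d dvd n" "moebius d \<noteq> 0"
  shows toggle_factor_dvd: "toggle_factor p d dvd n"
    and moebius_toggle_factor: "moebius (toggle_factor p d) = - moebius d"
    and toggle_factor_toggle_factor: "toggle_factor p (toggle_factor p d) = d"
proof -
  have "d > 0" "squarefree d"
    using moebius_nonzeroD[OF assms(4)] by auto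
  from toggle_factor_cases[OF assms(1) this(2)]
  have "toggle_factor p d dvd n \<and> moebius (toggle_factor p d) = - moebius d
    \<and> toggle_factor p (toggle_factor p d) = d"
  proof cases
    case (1 c)
    moreover have "coprime c p"
      using 1 assms(1) by (metis prime_imp_coprime coprime_commute)
    ultimately show ?thesis
      using assms \<open>d > 0\<close> prime_gt_1_nat[of p]
      by (auto simp: moebius_mult_prime divides_mult toggle_factor_def)
  next
    case (2 c)
    then show ?thesis
      using assms \<open>d > 0\<close> by (auto simp: moebius_mult_prime toggle_factor_def dvd_mult_left)
  qed
  then show "toggle_factor p d dvd n" "moebius (toggle_factor p d) = - moebius d"
    "toggle_factor p (toggle_factor p d) = d"
    by auto
qed

lemma toggle_factor_invariant:
  assumes "prime p" "squarefree d" "\<And>c. \<not> p dvd c \<Longrightarrow> h (c * p) = h c"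
  shows "h (toggle_factor p d) = h d"
  using toggle_factor_cases[OF assms(1,2)] assms(3) by metis

lemma bij_betw_toggle_factor:
  assumes "prime p" "p dvd n"
  shows "bij_betw (toggle_factor p) {d. d dvd n \<and> moebius d = 1} {d. d dvd n \<and> moebius d = -1}"
  by (rule bij_betw_byWitness[where f' = "toggle_factor p"])
    (use assms toggle_factor_dvd moebius_toggle_factor toggle_factor_toggle_factor in force)+

lemma moebius_prod_pos_eq_prod_neg:
  fixes h :: "nat \<Rightarrow> 'a::comm_monoid_mult"
  assumes "prime p" "p dvd n" and h: "\<And>c. \<not> p dvd c \<Longrightarrow> h (c * p) = h c"
  shows "(\<Prod>d\<in>{d. d dvd n \<and> moebius d = 1}. h d) = (\<Prod>d\<in>{d. d dvd n \<and> moebius d = -1}. h d)"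
proof -
  have "(\<Prod>d\<in>{d. d dvd n \<and> moebius d = 1}. h d)
      = (\<Prod>d\<in>{d. d dvd n \<and> moebius d = 1}. h (toggle_factor p d))"
    using toggle_factor_invariant[of p _ h] \<open>prime p\<close> h moebius_nonzeroD(2)
    by (intro prod.cong) auto
  also have "\<dots> = (\<Prod>d\<in>{d. d dvd n \<and> moebius d = -1}. h d)"
    by (rule prod.reindex_bij_betw[OF bij_betw_toggle_factor[OF assms(1,2)]])
  finally show ?thesis .
qed

lemma moebius_sum_eq_0:
  fixes h :: "nat \<Rightarrow> 'a::comm_ring_1"
  assumes "n > 0" "prime p" "p dvd n" and h: "\<And>c. \<not> p dvd c \<Longrightarrow> h (c * p) = h c"
  shows "(\<Sum>d\<in>{d. d dvd n}. of_int (moebius d) * h d) = 0"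
proof -
  let ?U = "{d. d dvd n \<and> moebius d = 1}" and ?V = "{d. d dvd n \<and> moebius d = -1}"
  have "(\<Sum>d\<in>{d. d dvd n}. of_int (moebius d) * h d) = (\<Sum>d\<in>?U \<union> ?V. of_int (moebius d) * h d)"
  proof (rule sum.mono_neutral_right)
    show "\<forall>d\<in>{d. d dvd n} - (?U \<union> ?V). of_int (moebius d) * h d = 0"
    proof
      fix d assume "d \<in> {d. d dvd n} - (?U \<union> ?V)"
      then have "moebius d = 0"
        using moebius_cases[of d] by auto
      then show "of_int (moebius d) * h d = 0" by simp
    qed
  qed (use \<open>n > 0\<close> in auto)
  also have "\<dots> = sum h ?U - sum h ?V"
    using \<open>n > 0\<close> by (subst sum.union_disjoint) (auto simp: sum_negf)
  also have "sum h ?U = sum h ?V"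
  proof -
    have "sum h ?U = (\<Sum>d\<in>?U. h (toggle_factor p d))"
      using toggle_factor_invariant[of p _ h] \<open>prime p\<close> h moebius_nonzeroD(2)
      by (intro sum.cong) auto
    also have "\<dots> = sum h ?V"
      by (rule sum.reindex_bij_betw[OF bij_betw_toggle_factor[OF assms(2,3)]])
    finally show ?thesis .
  qed
  finally show ?thesis by simp
qed

lemma lcm_mult_prime_left:
  fixes d e p :: nat
  assumes "prime p" "p dvd e" "\<not> p dvd d"
  shows "lcm (d * p) e = lcm d e"
proof -
  have "coprime d p"
    using assms by (metis prime_imp_coprime coprime_commute)
  then have "lcm (d * p) e = lcm (lcm d p) e"
    by (simp add: lcm_coprime)
  also have "\<dots> = lcm d (lcm p e)"
    by (rule lcm.assoc)
  also have "lcm p e = e"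
    using assms(2) by (simp add: lcm_proj2_iff_nat)
  finally show ?thesis .
qed

lemma
  fixes h :: "nat \<Rightarrow> 'a::comm_ring_1"
  assumes "n > 0" "e dvd n" "e \<noteq> 1"
  shows moebius_sum_lcm_eq_0: "(\<Sum>d\<in>{d. d dvd n}. of_int (moebius d) * h (lcm d e)) = 0"
    and moebius_prod_lcm_pos_eq_neg:
      "(\<Prod>d\<in>{d. d dvd n \<and> moebius d = 1}. h (lcm d e))
     = (\<Prod>d\<in>{d. d dvd n \<and> moebius d = -1}. h (lcm d e))"
proof -
  obtain p where p: "prime p" "p dvd e"
    using prime_factor_nat[OF \<open>e \<noteq> 1\<close>] by blast
  have "p dvd n"
    using p(2) \<open>e dvd n\<close> by (rule dvd_trans)
  have "h (lcm (c * p) e) = h (lcm c e)" if "\<not> p dvd c" for c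
    using lcm_mult_prime_left[OF p that] by simp
  then show "(\<Sum>d\<in>{d. d dvd n}. of_int (moebius d) * h (lcm d e)) = 0"
    "(\<Prod>d\<in>{d. d dvd n \<and> moebius d = 1}. h (lcm d e))
     = (\<Prod>d\<in>{d. d dvd n \<and> moebius d = -1}. h (lcm d e))"
    using moebius_sum_eq_0[OF \<open>n > 0\<close> p(1) \<open>p dvd n\<close>, of "\<lambda>d. h (lcm d e)"]
      moebius_prod_pos_eq_prod_neg[OF p(1) \<open>p dvd n\<close>, of "\<lambda>d. h (lcm d e)"]
    by blast+
qed

abbreviation ipoly :: "int poly \<Rightarrow> 'a::comm_ring_1 \<Rightarrow> 'a" where
  "ipoly f \<equiv> poly (map_poly of_int f)"

lemma map_poly_of_int_add: "map_poly of_int (p + q) = map_poly of_int p + map_poly of_int q"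
  by (rule poly_eqI) (simp add: coeff_map_poly)

lemma map_poly_of_int_mult: "map_poly of_int (p * q) = map_poly of_int p * map_poly of_int q"
  by (rule poly_eqI) (simp add: coeff_map_poly coeff_mult)

lemma ipoly_add [simp]: "ipoly (p + q) z = ipoly p z + ipoly q z"
  by (simp add: map_poly_of_int_add)

lemma ipoly_diff [simp]: "ipoly (p - q) z = ipoly p z - ipoly q z"
  by (metis ipoly_add diff_add_cancel eq_diff_eq)

lemma ipoly_mult [simp]: "ipoly (p * q) z = ipoly p z * ipoly q z"
  by (simp add: map_poly_of_int_mult)

lemma ipoly_const [simp]: "ipoly [:c:] z = of_int c"
  by (cases "c = 0") (simp_all add: map_poly_pCons)

lemma ipoly_of_int [simp]: "ipoly (of_int c) z = of_int c"
  by (simp add: of_int_poly)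

lemma ipoly_sum [simp]: "ipoly (\<Sum>x\<in>A. f x) z = (\<Sum>x\<in>A. ipoly (f x) z)"
  by (induction A rule: infinite_finite_induct) simp_all

lemma ipoly_prod [simp]: "ipoly (\<Prod>x\<in>A. f x) z = (\<Prod>x\<in>A. ipoly (f x) z)"
  by (induction A rule: infinite_finite_induct) simp_all

lemma ipoly_pcompose: "ipoly (pcompose p q) z = ipoly p (ipoly q z)"
  by (induction p) (simp_all add: pcompose_pCons map_poly_pCons)

lemma ipoly_qsub [simp]: "ipoly (qsub f d) z = ipoly f (z ^ d)"
  by (simp add: qsub_def ipoly_pcompose map_poly_monom poly_monom)

lemma ipoly_qint: "ipoly (qint n) z = (\<Sum>i<n. z ^ i)"
  by (simp add: qint_def map_poly_monom poly_monom)

lemma ipoly_qint_root_of_unity: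
  fixes z :: "'a::field"
  assumes "z ^ n = 1" "z \<noteq> 1"
  shows "ipoly (qint n) z = 0"
  using assms by (simp add: ipoly_qint sum_gp_strict)

lemma coeff_qint: "coeff (qint n) i = (if i < n then 1 else 0)"
  by (simp add: qint_def coeff_sum)

lemma degree_qint: "degree (qint n) = n - 1"
  by (cases n) (auto intro!: antisym degree_le le_degree simp: coeff_qint)

lemma lead_coeff_qint: "n \<ge> 1 \<Longrightarrow> lead_coeff (qint n) = 1"
  by (simp add: degree_qint coeff_qint)

lemma qint_dvd_iff_roots_of_unity:
  assumes "n \<ge> 1"
  shows "qint n dvd f \<longleftrightarrow> (\<forall>z::complex. z ^ n = 1 \<longrightarrow> z \<noteq> 1 \<longrightarrow> ipoly f z = 0)"
proof safe
  fix z :: complex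
  assume "qint n dvd f" "z ^ n = 1" "z \<noteq> 1"
  then show "ipoly f z = 0"
    by (auto elim!: dvdE simp: ipoly_qint_root_of_unity)
next
  assume roots: "\<forall>z::complex. z ^ n = 1 \<longrightarrow> z \<noteq> 1 \<longrightarrow> ipoly f z = 0"
  have "qint n \<noteq> 0"
    using lead_coeff_qint[OF assms] by auto
  obtain q r where "pseudo_divmod f (qint n) = (q, r)"
    by fastforce
  from pseudo_divmod[OF \<open>qint n \<noteq> 0\<close> this] lead_coeff_qint[OF assms]
  have f: "f = qint n * q + r" and r: "r = 0 \<or> degree r < n - 1"
    by (auto simp: degree_qint)
  have r_roots: "{z::complex. z ^ n = 1} - {1} \<subseteq> {z. ipoly r z = 0}"
    using roots by (auto simp: f ipoly_qint_root_of_unity)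
  show "qint n dvd f"
  proof (cases "r = 0")
    case False
    then have r': "map_poly (of_int :: int \<Rightarrow> complex) r \<noteq> 0"
      by (simp add: map_poly_eq_0_iff)
    have "card ({z::complex. z ^ n = 1} - {1}) \<le> card {z::complex. ipoly r z = 0}"
      using r_roots poly_roots_finite[OF r'] by (rule card_mono[rotated])
    also have "\<dots> \<le> degree r"
      using card_poly_roots_bound[OF r'] by (simp add: degree_map_poly)
    finally have "card ({z::complex. z ^ n = 1} - {1}) \<le> degree r" .
    then show ?thesis
      using r False assms by (simp add: card_roots_unity_eq card_Diff_singleton)
  qed (simp add: f)
qed

definition primitive_root :: "nat \<Rightarrow> 'a::monoid_mult \<Rightarrow> bool" where
  "primitive_root e z \<longleftrightarrow> 0 < e \<and> (\<forall>k. z ^ k = 1 \<longleftrightarrow> e dvd k)"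

lemma primitive_root_exists:
  fixes z :: "'a::monoid_mult"
  assumes "z ^ n = 1" "n > 0"
  obtains e where "primitive_root e z" "e dvd n"
proof -
  define e where "e = (LEAST k. 0 < k \<and> z ^ k = 1)"
  have e: "0 < e" "z ^ e = 1"
    using LeastI[of "\<lambda>k. 0 < k \<and> z ^ k = 1", OF conjI[OF assms(2,1)]] by (simp_all add: e_def)
  have order: "z ^ k = 1 \<longleftrightarrow> e dvd k" for k
  proof
    assume "z ^ k = 1"
    have "z ^ k = z ^ (e * (k div e) + k mod e)"
      by simp
    also have "\<dots> = (z ^ e) ^ (k div e) * z ^ (k mod e)"
      by (simp only: power_add power_mult)
    finally have "z ^ k = (z ^ e) ^ (k div e) * z ^ (k mod e)" .
    with \<open>z ^ k = 1\<close> e have "z ^ (k mod e) = 1"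
      by simp
    then have "\<not> 0 < k mod e"
      using Least_le[of "\<lambda>k. 0 < k \<and> z ^ k = 1" "k mod e"] mod_less_divisor[OF \<open>0 < e\<close>, of k]
      by (auto simp: e_def[symmetric])
    then show "e dvd k"
      by (simp add: dvd_eq_mod_eq_0)
  next
    assume "e dvd k"
    then show "z ^ k = 1"
      using e by (auto elim!: dvdE simp: power_mult)
  qed
  show ?thesis
  proof (rule that)
    show "primitive_root e z"
      using e order by (simp add: primitive_root_def)
    show "e dvd n"
      using order assms(1) by simp
  qed
qed

lemma primitive_root_eq_1_iff: "primitive_root e z \<Longrightarrow> z = 1 \<longleftrightarrow> e = 1"
  unfolding primitive_root_def by (metis nat_dvd_1_iff_1 power_one_right)

lemma primitive_root_power:
  assumes "primitive_root e z" "d > 0"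
  shows "primitive_root (lcm d e div d) (z ^ d)"
proof -
  have "e dvd d * k \<longleftrightarrow> lcm d e div d dvd k" for k
  proof -
    have "e dvd d * k \<longleftrightarrow> lcm d e dvd d * k"
      by simp
    also have "lcm d e = d * (lcm d e div d)"
      by simp
    also have "\<dots> dvd d * k \<longleftrightarrow> lcm d e div d dvd k"
      using \<open>d > 0\<close> by (rule nat_mult_dvd_cancel1)
    finally show ?thesis .
  qed
  moreover have "lcm d e div d > 0"
    using assms by (auto simp: primitive_root_def div_greater_zero_iff intro!: dvd_imp_le lcm_pos_nat)
  ultimately show ?thesis
    using assms(1) by (simp add: primitive_root_def power_mult[symmetric])
qed

context
  fixes a :: "nat \<Rightarrow> int poly" and n e :: nat and z :: complex
  assumes values_below: "\<And>m e' w. 1 \<le> m \<Longrightarrow> m < n \<Longrightarrow> primitive_root e' w \<Longrightarrow> e' dvd m \<Longrightarrow>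
      ipoly (a m) w = ipoly (a (m div e')) (1::complex)"
    and n_pos: "n > 0" and root: "primitive_root e z" "e dvd n"
begin

lemma qsub_at_primitive_root:
  assumes "d dvd n" "d \<noteq> 1"
  shows "ipoly (qsub (a (n div d)) d) z = ipoly (a (n div lcm d e)) 1"
proof -
  have "d > 0"
    using n_pos assms(1) by (rule dvd_pos_nat)
  with assms(2) have "d > 1"
    by simp
  have "lcm d e dvd n"
    using assms root by simp
  have "1 \<le> n div d" "n div d < n"
    using assms \<open>d > 1\<close> n_pos by (auto simp: div_greater_zero_iff dvd_imp_le)
  moreover have "primitive_root (lcm d e div d) (z ^ d)"
    using root \<open>d > 1\<close> by (simp add: primitive_root_power)
  moreover have "lcm d e div d dvd n div d"
    using \<open>lcm d e dvd n\<close> \<open>d dvd n\<close> by simp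
  ultimately have "ipoly (a (n div d)) (z ^ d) = ipoly (a (n div d div (lcm d e div d))) 1"
    by (rule values_below)
  also have "n div d div (lcm d e div d) = n div lcm d e"
    using \<open>lcm d e dvd n\<close> by (simp add: div_div_div_same)
  finally show ?thesis
    by simp
qed

lemma moebius_sum_at_primitive_root:
  assumes "e \<noteq> 1"
  shows "ipoly (\<Sum>d\<in>{d. d dvd n}. of_int (moebius d) * qsub (a (n div d)) d) z
       = ipoly (a n) z - ipoly (a (n div e)) 1"
proof -
  define b where "b d = ipoly (qsub (a (n div d)) d) z" for d
  define g where "g d = ipoly (a (n div lcm d e)) (1::complex)" for d
  have "ipoly (\<Sum>d\<in>{d. d dvd n}. of_int (moebius d) * qsub (a (n div d)) d) z
      = (\<Sum>d\<in>{d. d dvd n}. of_int (moebius d) * g d)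
        + (\<Sum>d\<in>{d. d dvd n}. of_int (moebius d) * (b d - g d))"
    by (simp add: b_def right_diff_distrib sum_subtractf)
  also have "(\<Sum>d\<in>{d. d dvd n}. of_int (moebius d) * g d) = 0"
    unfolding g_def using n_pos root(2) assms by (rule moebius_sum_lcm_eq_0)
  also have "(\<Sum>d\<in>{d. d dvd n}. of_int (moebius d) * (b d - g d))
      = (\<Sum>d\<in>{d. d dvd n}. if d = 1 then b 1 - g 1 else 0)"
    using qsub_at_primitive_root by (intro sum.cong) (auto simp: b_def g_def)
  also have "\<dots> = b 1 - g 1"
    using n_pos by simp
  finally show ?thesis
    by (simp add: b_def g_def)
qed

lemma moebius_prod_diff_at_primitive_root:
  assumes "e \<noteq> 1"
  shows "ipoly ((\<Prod>d\<in>{d. d dvd n \<and> moebius d = 1}. qsub (a (n div d)) d)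
              - (\<Prod>d\<in>{d. d dvd n \<and> moebius d = -1}. qsub (a (n div d)) d)) z
       = ipoly (\<Sum>d\<in>{d. d dvd n}. of_int (moebius d) * qsub (a (n div d)) d) z
         * ipoly (\<Prod>d\<in>{d. d dvd n \<and> d > 1 \<and> moebius d = 1}. qsub (a (n div d)) d) z"
proof -
  define b where "b d = ipoly (qsub (a (n div d)) d) z" for d
  define g where "g d = ipoly (a (n div lcm d e)) (1::complex)" for d
  let ?U = "{d. d dvd n \<and> moebius d = 1}" and ?V = "{d. d dvd n \<and> moebius d = -1}"
    and ?U' = "{d. d dvd n \<and> d > 1 \<and> moebius d = 1}"
  have bg: "b d = g d" if "d dvd n" "d \<noteq> 1" for d
    using qsub_at_primitive_root[OF that] by (simp add: b_def g_def)
  have U: "?U = insert 1 ?U'" "1 \<notin> ?U'" "finite ?U'"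
    using n_pos by (auto simp: dvd_pos_nat)
  have P: "prod b ?U' = prod g ?U'"
    using bg by (intro prod.cong) auto
  have "prod b ?V = prod g ?V"
  proof (rule prod.cong)
    fix d assume "d \<in> ?V"
    then show "b d = g d"
      using bg[of d] by (cases "d = 1") auto
  qed simp
  also have "\<dots> = prod g ?U"
    unfolding g_def using n_pos root(2) assms by (rule moebius_prod_lcm_pos_eq_neg[symmetric])
  finally have V: "prod b ?V = g 1 * prod g ?U'"
    using U by simp
  have "ipoly (prod (\<lambda>d. qsub (a (n div d)) d) ?U - prod (\<lambda>d. qsub (a (n div d)) d) ?V) z
      = prod b ?U - prod b ?V"
    by (simp add: b_def)
  also have "\<dots> = (b 1 - g 1) * prod b ?U'"
    using U V P by (simp add: algebra_simps)
  also have "b 1 - g 1 = ipoly (\<Sum>d\<in>{d. d dvd n}. of_int (moebius d) * qsub (a (n div d)) d) z"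
    using moebius_sum_at_primitive_root[OF assms] by (simp add: b_def g_def)
  finally show ?thesis
    by (simp add: b_def)
qed

end

lemma value_at_primitive_root:
  fixes a :: "nat \<Rightarrow> int poly" and z :: complex
  assumes moebius_dvd: "\<And>n. 1 \<le> n \<Longrightarrow> n < N \<Longrightarrow>
      qint n dvd (\<Sum>d\<in>{d. d dvd n}. of_int (moebius d) * qsub (a (n div d)) d)"
  shows "1 \<le> n \<Longrightarrow> n < N \<Longrightarrow> primitive_root e z \<Longrightarrow> e dvd n \<Longrightarrow>
      ipoly (a n) z = ipoly (a (n div e)) 1"
proof (induction n arbitrary: e z rule: less_induct)
  case (less n)
  show ?case
  proof (cases "e = 1")
    case True
    then show ?thesis
      using primitive_root_eq_1_iff[OF less.prems(3)] by simp
  next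
    case False
    have values_below: "ipoly (a m) w = ipoly (a (m div e')) (1::complex)"
      if "1 \<le> m" "m < n" "primitive_root e' w" "e' dvd m" for m e' w
      using less.IH[OF that(2,1)] that less.prems(2) by simp
    have "z ^ n = 1" "z \<noteq> 1"
      using less.prems False primitive_root_eq_1_iff[of e z] by (auto simp: primitive_root_def)
    then have "ipoly (\<Sum>d\<in>{d. d dvd n}. of_int (moebius d) * qsub (a (n div d)) d) z = 0"
      using moebius_dvd[OF less.prems(1,2)] qint_dvd_iff_roots_of_unity[OF less.prems(1)] by blast
    moreover have "ipoly (\<Sum>d\<in>{d. d dvd n}. of_int (moebius d) * qsub (a (n div d)) d) z
        = ipoly (a n) z - ipoly (a (n div e)) 1"
      using moebius_sum_at_primitive_root[OF values_below _ less.prems(3,4) False] less.prems(1)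
      by simp
    ultimately show ?thesis
      by simp
  qed
qed

theorem lemma3:
  fixes a :: "nat \<Rightarrow> int poly" and N :: nat
  assumes "N \<ge> 1"
    and "qint N dvd
          (\<Prod>d\<in>{d. d dvd N \<and> moebius d = 1}. qsub (a (N div d)) d)
        - (\<Prod>d\<in>{d. d dvd N \<and> moebius d = -1}. qsub (a (N div d)) d)"
    and "\<And>n. 1 \<le> n \<Longrightarrow> n < N \<Longrightarrow>
          qint n dvd (\<Sum>d\<in>{d. d dvd n}. of_int (moebius d) * qsub (a (n div d)) d)"
  shows "qint N dvd
          (\<Sum>d\<in>{d. d dvd N}. of_int (moebius d) * qsub (a (N div d)) d)
        * (\<Prod>d\<in>{d. d dvd N \<and> d > 1 \<and> moebius d = 1}. qsub (a (N div d)) d)"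
proof (rule qint_dvd_iff_roots_of_unity[OF assms(1), THEN iffD2], intro allI impI)
  fix z :: complex
  assume "z ^ N = 1" "z \<noteq> 1"
  obtain e where e: "primitive_root e z" "e dvd N"
    using primitive_root_exists[OF \<open>z ^ N = 1\<close>] assms(1) by auto
  have "e \<noteq> 1"
    using primitive_root_eq_1_iff[OF e(1)] \<open>z \<noteq> 1\<close> by simp
  have values_below: "ipoly (a m) w = ipoly (a (m div e')) (1::complex)"
    if "1 \<le> m" "m < N" "primitive_root e' w" "e' dvd m" for m e' w
    using value_at_primitive_root[OF assms(3) that] .
  have "N > 0"
    using assms(1) by simp
  have "ipoly ((\<Sum>d\<in>{d. d dvd N}. of_int (moebius d) * qsub (a (N div d)) d)
        * (\<Prod>d\<in>{d. d dvd N \<and> d > 1 \<and> moebius d = 1}. qsub (a (N div d)) d)) z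
      = ipoly ((\<Prod>d\<in>{d. d dvd N \<and> moebius d = 1}. qsub (a (N div d)) d)
             - (\<Prod>d\<in>{d. d dvd N \<and> moebius d = -1}. qsub (a (N div d)) d)) z"
    unfolding ipoly_mult
    by (rule moebius_prod_diff_at_primitive_root[OF values_below \<open>N > 0\<close> e \<open>e \<noteq> 1\<close>, symmetric])
  also have "\<dots> = 0"
    using assms(2) \<open>z ^ N = 1\<close> \<open>z \<noteq> 1\<close> qint_dvd_iff_roots_of_unity[OF assms(1)] by blast
  finally show "ipoly ((\<Sum>d\<in>{d. d dvd N}. of_int (moebius d) * qsub (a (N div d)) d)
        * (\<Prod>d\<in>{d. d dvd N \<and> d > 1 \<and> moebius d = 1}. qsub (a (N div d)) d)) z = 0" .
qed

end
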